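(* Suppose that $\rho\ge2$ and $\rho=t-\Theta(1)$. Then $y_t(\rho)=\log(t2^t)+O(1)$. Explicitly: for all constants $C>c>0$ there is $K$ such that for every positive integer $t$ and real $\rho\ge2$ with $c<t-\rho<C$, we have $|y_t(\rho)-\log(t2^t)|\le K$.
   Context: $d_i=2^{\binom i2}i!$. For positive integer $t$ and real $1<\rho<t$, $x_t(\rho),y_t(\rho)$ are the unique reals $x,y$ with $\sum_{i=1}^t e^{x+iy}d_i^{-1}=1$ and $\sum_{i=1}^t ie^{x+iy}d_i^{-1}=\rho$. Logarithms are natural. *)

theory Defs
  imports "HOL-Analysis.Analysis"
begin

definition d :: "nat \<Rightarrow> real" where
  "d i = 2 powr (real (i choose 2)) * fact i"

definition xy_eqs :: "nat \<Rightarrow> real \<Rightarrow> real \<Rightarrow> real \<Rightarrow> bool" where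
  "xy_eqs t \<rho> x y \<longleftrightarrow>
     (\<Sum>i=1..t. exp (x + real i * y) / d i) = 1 \<and>
     (\<Sum>i=1..t. real i * exp (x + real i * y) / d i) = \<rho>"

definition xy :: "nat \<Rightarrow> real \<Rightarrow> real \<times> real" where
  "xy t \<rho> = (THE p. xy_eqs t \<rho> (fst p) (snd p))"

definition x_t :: "nat \<Rightarrow> real \<Rightarrow> real" where
  "x_t t \<rho> = fst (xy t \<rho>)"

definition y_t :: "nat \<Rightarrow> real \<Rightarrow> real" where
  "y_t t \<rho> = snd (xy t \<rho>)"

end

(*
  Write p_i = e^(x + i y) / d_i. For a solution (x, y) these weights form a probability
  distribution on {1..t} with mean \<rho>, and d_(i+1) = d_i 2^i (i + 1) makes the ratio
  p_(i+1) / p_i equal to e^y / (2^i (i + 1)).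

  Upper bound: p_i \<le> t 2^i e^-y for i < t, so t - \<rho> = \<Sum> (t - i) p_i \<le> 2 t 2^t e^-y,
  and t - \<rho> > c gives e^y \<le> (2/c) t 2^t.
  Lower bound: if e^y \<le> t 2^t / 2^(M+2) with 2M \<le> t, the ratios are at most 1/2 on the
  last M indices, so half of the mass lies at distance \<ge> M from t and t - \<rho> \<ge> M/2;
  choosing M/2 > C excludes this. For t < 2M, \<rho> \<ge> 2 alone forces e^y \<ge> 1/2.

  The pair (x, y) exists and y_t picks it: as a function of y, \<rho> is the mean of an
  exponentially tilted distribution, which is continuous and strictly increasing.
*)
theory Submission
  imports Defs
begin

lemma mult_exp_diff_pos:
  fixes a b s :: real
  assumes "0 < s" "a \<noteq> b"
  shows "0 < (a - b) * (exp (a * s) - exp (b * s))"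
  using assms by (cases "a < b") (auto intro: mult_neg_neg mult_pos_pos)

lemma strict_mono_tilted_average:
  fixes f w :: "'a \<Rightarrow> real"
  assumes fin: "finite I" and w: "\<And>k. k \<in> I \<Longrightarrow> 0 < w k"
    and ij: "i \<in> I" "j \<in> I" "f i \<noteq> f j"
  shows "strict_mono (\<lambda>y. (\<Sum>k\<in>I. f k * (w k * exp (f k * y))) / (\<Sum>k\<in>I. w k * exp (f k * y)))"
proof (rule strict_monoI)
  fix y y' :: real
  assume "y < y'"
  define P where "P k = w k * exp (f k * y)" for k
  define Q where "Q k = w k * exp (f k * y')" for k
  have cross: "Q k * P l - P k * Q l
      = w k * w l * exp ((f k + f l) * y) * (exp (f k * (y' - y)) - exp (f l * (y' - y)))" for k l
    by (simp add: P_def Q_def algebra_simps flip: exp_add)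
  have term_pos: "0 < (f k - f l) * (Q k * P l - P k * Q l)" if "k \<in> I" "l \<in> I" "f k \<noteq> f l" for k l
    using mult_exp_diff_pos[of "y' - y" "f k" "f l"] \<open>y < y'\<close> w[OF that(1)] w[OF that(2)] that(3)
    unfolding cross by (simp add: mult.assoc mult.left_commute[of "f k - f l"])
  have term_nonneg: "0 \<le> (f k - f l) * (Q k * P l - P k * Q l)" if "k \<in> I" "l \<in> I" for k l
    using term_pos[OF that] by (cases "f k = f l") auto
  \<comment> \<open>Symmetrising the cross-multiplied comparison of the two averages over pairs (k, l)
    gives a sum of terms that are all nonnegative, and positive at (i, j).\<close>
  have "0 < (\<Sum>k\<in>I. \<Sum>l\<in>I. (f k - f l) * (Q k * P l - P k * Q l))"
  proof (rule sum_pos2[OF fin ij(1)])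
    show "0 < (\<Sum>l\<in>I. (f i - f l) * (Q i * P l - P i * Q l))"
      using ij by (intro sum_pos2[OF fin ij(2)] term_pos term_nonneg) auto
  qed (auto intro: sum_nonneg term_nonneg)
  also have "\<dots> = (\<Sum>k\<in>I. \<Sum>l\<in>I. f k * (Q k * P l - P k * Q l))
                   + (\<Sum>k\<in>I. \<Sum>l\<in>I. f l * (Q l * P k - P l * Q k))"
    by (simp only: sum.distrib[symmetric]) (simp add: algebra_simps)
  also have "\<dots> = 2 * (\<Sum>k\<in>I. \<Sum>l\<in>I. f k * (Q k * P l - P k * Q l))"
    using sum.swap[of "\<lambda>k l. f l * (Q l * P k - P l * Q k)" I I] by simp
  also have "\<dots> = 2 * ((\<Sum>k\<in>I. f k * Q k) * (\<Sum>k\<in>I. P k) - (\<Sum>k\<in>I. f k * P k) * (\<Sum>k\<in>I. Q k))"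
    by (simp add: sum_product right_diff_distrib sum_subtractf mult.assoc)
  finally have "(\<Sum>k\<in>I. f k * P k) * (\<Sum>k\<in>I. Q k) < (\<Sum>k\<in>I. f k * Q k) * (\<Sum>k\<in>I. P k)"
    by simp
  moreover have "0 < (\<Sum>k\<in>I. P k)" "0 < (\<Sum>k\<in>I. Q k)"
    using ij(1) w by (auto simp: P_def Q_def intro!: sum_pos2[OF fin ij(1)] sum_nonneg less_imp_le)
  ultimately show "(\<Sum>k\<in>I. f k * P k) / (\<Sum>k\<in>I. P k) < (\<Sum>k\<in>I. f k * Q k) / (\<Sum>k\<in>I. Q k)"
    by (simp add: divide_less_eq less_divide_eq mult.commute)
qed

text \<open>The summand \<open>p t\<close> on the left makes the statement amenable to induction on \<open>t\<close>.\<close>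

lemma sum_tail_le_of_halving:
  fixes p :: "nat \<Rightarrow> real"
  assumes "L \<le> t" and "\<And>i. L \<le> i \<Longrightarrow> i < t \<Longrightarrow> 2 * p (Suc i) \<le> p i"
  shows "(\<Sum>i=Suc L..t. p i) + p t \<le> p L"
  using assms by (induction t rule: dec_induct) force+

lemma abs_diff_ln_le_of_exp_bounds:
  fixes y T A B :: real
  assumes "0 < T" "0 < A" "0 < B" "T \<le> A * exp y" "exp y \<le> B * T"
  shows "\<bar>y - ln T\<bar> \<le> max (ln A) (ln B)"
proof -
  have "ln T \<le> ln (A * exp y)" and "y \<le> ln (B * T)"
    using assms by (simp_all add: ln_ge_iff)
  then have "ln T \<le> ln A + y" and "y \<le> ln B + ln T"
    using assms by (simp_all add: ln_mult)
  then show ?thesis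
    unfolding abs_le_iff using max.cobounded1[of "ln A" "ln B"] max.cobounded2[of "ln A" "ln B"]
    by linarith
qed

lemma sum_half_powers_le: "(\<Sum>i=1..t. (1/2::real) ^ (i - 1)) \<le> 2"
proof -
  have "(\<Sum>i=1..t. (1/2::real) ^ (i - 1)) = 2 - 2 * (1/2) ^ t"
    by (induction t) (auto simp: power_Suc)
  then show ?thesis
    by simp
qed

lemma sum_diff_mult_power2_le: "(\<Sum>i=1..t. (real t - real i) * 2 ^ i) \<le> 2 ^ (t + 1)"
proof -
  have "(\<Sum>i=1..t. (real t - real i) * 2 ^ i) = 2 ^ (t + 1) - 2 * real t - 2"
  proof (induction t)
    case (Suc t)
    have "(\<Sum>i=1..t. (2::real) ^ i) = 2 ^ (t + 1) - 2"
      by (induction t) auto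
    moreover have "(\<Sum>i=1..Suc t. (real (Suc t) - real i) * 2 ^ i)
        = (\<Sum>i=1..t. (real t - real i) * 2 ^ i + 2 ^ i)"
      by (simp add: algebra_simps)
    ultimately show ?case
      using Suc.IH by (simp add: sum.distrib)
  qed simp
  then show ?thesis
    by simp
qed

lemma d_pos: "0 < d i"
  by (simp add: d_def)

lemma d_nonzero: "d i \<noteq> 0"
  using d_pos[of i] by simp

lemma d_Suc: "d (Suc i) = d i * 2 ^ i * (real i + 1)"
proof -
  have "Suc i choose 2 = (i choose 2) + i"
    by (simp add: numeral_2_eq_2)
  then show ?thesis
    by (simp add: d_def powr_add powr_realpow algebra_simps)
qed

lemma d_ge_mult_power2: "1 \<le> i \<Longrightarrow> real i * 2 ^ (i - 1) \<le> d i"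
proof (induction i rule: dec_induct)
  case base
  show ?case
    by (simp add: d_def numeral_2_eq_2)
next
  case (step n)
  have "1 \<le> real n * 2 ^ (n - 1)"
    using step.hyps one_le_power[of "2::real" "n - 1"] mult_mono[of 1 "real n" 1 "2 ^ (n - 1)"]
    by simp
  have "real (Suc n) * 2 ^ (Suc n - 1) = 1 * (2 ^ n * (real n + 1))"
    by simp
  also have "\<dots> \<le> (real n * 2 ^ (n - 1)) * (2 ^ n * (real n + 1))"
    using \<open>1 \<le> real n * 2 ^ (n - 1)\<close> by (intro mult_right_mono) auto
  also have "\<dots> \<le> d n * (2 ^ n * (real n + 1))"
    using step.IH by (simp add: mult_right_mono)
  finally show ?case
    by (simp add: d_Suc mult.assoc)
qed

definition gibbs_weight :: "real \<Rightarrow> real \<Rightarrow> nat \<Rightarrow> real" where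
  "gibbs_weight x y i = exp (x + real i * y) / d i"

lemma gibbs_weight_pos: "0 < gibbs_weight x y i"
  by (simp add: gibbs_weight_def d_pos)

lemma gibbs_weight_nonneg: "0 \<le> gibbs_weight x y i"
  using gibbs_weight_pos[of x y i] by simp

lemma gibbs_weight_Suc:
  "gibbs_weight x y (Suc i) * (2 ^ i * (real i + 1)) = gibbs_weight x y i * exp y"
proof -
  have "exp (x + real (Suc i) * y) = exp (x + real i * y) * exp y"
    by (simp add: algebra_simps flip: exp_add)
  then have "gibbs_weight x y (Suc i) = gibbs_weight x y i * exp y / (2 ^ i * (real i + 1))"
    by (simp add: gibbs_weight_def d_Suc)
  then show ?thesis
    by simp
qed

lemma xy_eqs_gibbs_weight:
  "xy_eqs t \<rho> x y \<longleftrightarrow>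
     (\<Sum>i=1..t. gibbs_weight x y i) = 1 \<and> (\<Sum>i=1..t. real i * gibbs_weight x y i) = \<rho>"
  by (simp add: xy_eqs_def gibbs_weight_def)

lemma xy_eqs_sum_diff:
  assumes "xy_eqs t \<rho> x y"
  shows "(\<Sum>i=1..t. (a - real i) * gibbs_weight x y i) = a - \<rho>"
  using assms
  by (simp add: xy_eqs_gibbs_weight left_diff_distrib sum_subtractf flip: sum_distrib_left)

lemma gibbs_weight_le_one:
  assumes "xy_eqs t \<rho> x y" "i \<in> {1..t}"
  shows "gibbs_weight x y i \<le> 1"
proof -
  have "gibbs_weight x y i \<le> (\<Sum>j=1..t. gibbs_weight x y j)"
    using assms(2) by (intro member_le_sum) (auto intro: gibbs_weight_nonneg)
  with assms(1) show ?thesis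
    by (simp add: xy_eqs_gibbs_weight)
qed

lemma xy_eqs_imp_ge_one: "xy_eqs t \<rho> x y \<Longrightarrow> 1 \<le> t"
  by (cases t) (simp_all add: xy_eqs_def)

lemma mean_le_of_exp_le_one:
  assumes eqs: "xy_eqs t \<rho> x y" and "exp y \<le> 1"
  shows "\<rho> \<le> 1 + 2 * exp y"
proof -
  have "exp (x + y) \<le> 1"
    using gibbs_weight_le_one[OF eqs, of 1] xy_eqs_imp_ge_one[OF eqs]
    by (simp add: gibbs_weight_def d_def numeral_2_eq_2)
  have term_le: "(real i - 1) * gibbs_weight x y i \<le> exp y * (1/2) ^ (i - 1)" if "1 \<le> i" for i
  proof (cases "i = 1")
    case False
    then have "2 \<le> i" using that by simp
    have "exp (x + real i * y) = exp (x + y) * exp y ^ (i - 1)"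
      using \<open>2 \<le> i\<close> by (simp add: of_nat_diff algebra_simps flip: exp_add exp_of_nat_mult)
    also have "\<dots> \<le> 1 * exp y"
      using \<open>exp (x + y) \<le> 1\<close> \<open>exp y \<le> 1\<close> \<open>2 \<le> i\<close> power_decreasing[of 1 "i - 1" "exp y"]
      by (intro mult_mono) auto
    finally have "(real i - 1) * gibbs_weight x y i \<le> exp y * ((real i - 1) / d i)"
      using \<open>2 \<le> i\<close> d_pos[of i] by (simp add: gibbs_weight_def mult_left_mono divide_right_mono)
    also have "\<dots> \<le> exp y * (1/2) ^ (i - 1)"
    proof -
      have "(real i - 1) * 2 ^ (i - 1) \<le> real i * 2 ^ (i - 1)"
        by (intro mult_right_mono) auto
      then have "(real i - 1) * 2 ^ (i - 1) \<le> d i"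
        using d_ge_mult_power2[OF that] by linarith
      then show ?thesis
        using d_pos[of i] by (intro mult_left_mono) (auto simp: divide_simps power_one_over)
    qed
    finally show ?thesis .
  qed simp
  have "\<rho> - 1 = (\<Sum>i=1..t. (real i - 1) * gibbs_weight x y i)"
    using eqs by (simp add: xy_eqs_gibbs_weight left_diff_distrib sum_subtractf)
  also have "\<dots> \<le> (\<Sum>i=1..t. exp y * (1/2) ^ (i - 1))"
    using term_le by (intro sum_mono) auto
  also have "\<dots> \<le> exp y * 2"
    using sum_half_powers_le[of t] by (simp flip: sum_distrib_left)
  finally show ?thesis
    by simp
qed

lemma gap_mult_exp_le:
  assumes eqs: "xy_eqs t \<rho> x y"
  shows "(real t - \<rho>) * exp y \<le> 2 * real t * 2 ^ t"
proof -
  have term_le: "(real t - real i) * gibbs_weight x y i * exp y \<le> real t * ((real t - real i) * 2 ^ i)"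
    if "i \<in> {1..t}" for i
  proof (cases "i = t")
    case False
    then have "i < t" "Suc i \<in> {1..t}" using that by auto
    have "gibbs_weight x y i * exp y = gibbs_weight x y (Suc i) * (real i + 1) * 2 ^ i"
      using gibbs_weight_Suc[of x y i] by (simp add: ac_simps)
    also have "\<dots> \<le> 1 * real t * 2 ^ i"
      using gibbs_weight_le_one[OF eqs \<open>Suc i \<in> {1..t}\<close>] gibbs_weight_pos[of x y "Suc i"] \<open>i < t\<close>
      by (intro mult_right_mono mult_mono) auto
    finally have "gibbs_weight x y i * exp y \<le> real t * 2 ^ i"
      by simp
    from mult_left_mono[OF this, of "real t - real i"] show ?thesis
      using \<open>i < t\<close> by (simp add: ac_simps)
  qed simp
  have "(real t - \<rho>) * exp y = (\<Sum>i=1..t. (real t - real i) * gibbs_weight x y i * exp y)"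
    by (simp only: xy_eqs_sum_diff[OF eqs, symmetric] sum_distrib_right)
  also have "\<dots> \<le> (\<Sum>i=1..t. real t * ((real t - real i) * 2 ^ i))"
    using term_le by (intro sum_mono)
  also have "\<dots> \<le> real t * 2 ^ (t + 1)"
    using sum_diff_mult_power2_le[of t] by (simp add: mult_left_mono flip: sum_distrib_left)
  finally show ?thesis
    by simp
qed

lemma gap_ge_of_exp_le:
  assumes eqs: "xy_eqs t \<rho> x y" and "1 \<le> M" "2 * M \<le> t"
    and small: "exp y * 2 ^ (M + 2) \<le> real t * 2 ^ t"
  shows "real M / 2 \<le> real t - \<rho>"
proof -
  define L where "L = t - M"
  have "1 \<le> L" "M \<le> L" and t_eq: "t = L + M"
    using assms by (auto simp: L_def)
  let ?p = "gibbs_weight x y"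
  \<comment> \<open>The weights at least halve beyond L, so the mass beyond L is at most the weight at L.\<close>
  have halving: "2 * ?p (Suc i) \<le> ?p i" if "L \<le> i" "i < t" for i
  proof -
    have "4 * exp y \<le> real t * 2 ^ L"
      using small by (simp add: t_eq power_add)
    also have "\<dots> \<le> (2 * real i) * 2 ^ i"
      using that \<open>M \<le> L\<close> t_eq by (intro mult_mono power_increasing) auto
    finally have "2 * exp y \<le> real i * 2 ^ i"
      by simp
    then have "2 * exp y \<le> 2 ^ i * (real i + 1)"
      using add_increasing[of "2 ^ i" "2 * exp y" "real i * 2 ^ i"] by (simp add: algebra_simps)
    then have "2 * ?p (Suc i) * (2 ^ i * (real i + 1)) \<le> ?p i * (2 ^ i * (real i + 1))"
      using gibbs_weight_Suc[of x y i] gibbs_weight_pos[of x y i]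
      by (simp add: mult.assoc mult_left_mono)
    then show ?thesis
      by simp
  qed
  have "(\<Sum>i=Suc L..t. ?p i) \<le> ?p L"
    using sum_tail_le_of_halving[of L t ?p] halving gibbs_weight_pos[of x y t] t_eq by force
  moreover have "?p L \<le> (\<Sum>i=1..L. ?p i)"
    using \<open>1 \<le> L\<close> by (intro member_le_sum) (auto intro: gibbs_weight_nonneg)
  moreover have "(\<Sum>i=1..L. ?p i) + (\<Sum>i=Suc L..t. ?p i) = 1"
    using eqs sum.ub_add_nat[of 1 L ?p M] by (simp add: xy_eqs_gibbs_weight t_eq)
  ultimately have "1 / 2 \<le> (\<Sum>i=1..L. ?p i)"
    by linarith
  then have "real M / 2 \<le> (\<Sum>i=1..L. real M * ?p i)"
    using mult_left_mono[of "1/2" _ "real M"] by (simp flip: sum_distrib_left)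
  also have "\<dots> \<le> (\<Sum>i=1..L. (real t - real i) * ?p i)"
    using t_eq by (intro sum_mono mult_right_mono) (auto intro: gibbs_weight_nonneg)
  also have "\<dots> \<le> (\<Sum>i=1..t. (real t - real i) * ?p i)"
    using t_eq by (intro sum_mono2) (auto intro!: mult_nonneg_nonneg gibbs_weight_nonneg)
  also have "\<dots> = real t - \<rho>"
    by (rule xy_eqs_sum_diff[OF eqs])
  finally show ?thesis .
qed

definition partition_fn :: "nat \<Rightarrow> real \<Rightarrow> real" where
  "partition_fn t y = (\<Sum>i=1..t. exp (real i * y) / d i)"

definition tilted_mean :: "nat \<Rightarrow> real \<Rightarrow> real" where
  "tilted_mean t y = (\<Sum>i=1..t. real i * exp (real i * y) / d i) / partition_fn t y"

lemma partition_fn_pos: "1 \<le> t \<Longrightarrow> 0 < partition_fn t y"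
  unfolding partition_fn_def by (intro sum_pos) (auto simp: d_pos)

lemma xy_eqs_iff_tilted_mean:
  assumes "1 \<le> t"
  shows "xy_eqs t \<rho> x y \<longleftrightarrow> x = - ln (partition_fn t y) \<and> tilted_mean t y = \<rho>"
proof -
  define Z where "Z = partition_fn t y"
  define N where "N = (\<Sum>i=1..t. real i * exp (real i * y) / d i)"
  have "0 < Z"
    using partition_fn_pos[OF assms] by (simp add: Z_def)
  have "xy_eqs t \<rho> x y \<longleftrightarrow> exp x * Z = 1 \<and> exp x * N = \<rho>"
    by (simp add: xy_eqs_def Z_def N_def partition_fn_def exp_add sum_distrib_left ac_simps)
  also have "\<dots> \<longleftrightarrow> exp x = exp (- ln Z) \<and> N / Z = \<rho>"
    using \<open>0 < Z\<close> by (auto simp: exp_minus field_simps)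
  also have "\<dots> \<longleftrightarrow> x = - ln Z \<and> N / Z = \<rho>"
    by simp
  finally show ?thesis
    by (simp add: Z_def N_def tilted_mean_def)
qed

lemma strict_mono_tilted_mean:
  assumes "2 \<le> t"
  shows "strict_mono (tilted_mean t)"
proof -
  have "tilted_mean t = (\<lambda>y. (\<Sum>k\<in>{1..t}. real k * (inverse (d k) * exp (real k * y)))
                               / (\<Sum>k\<in>{1..t}. inverse (d k) * exp (real k * y)))"
    by (simp add: fun_eq_iff tilted_mean_def partition_fn_def divide_inverse ac_simps)
  then show ?thesis
    using assms
    by (simp only:) (intro strict_mono_tilted_average[where i = 1 and j = 2], auto simp: d_pos)
qed

lemma y_t_eqI:
  assumes "2 \<le> t" and eqs: "xy_eqs t \<rho> x y"
  shows "y_t t \<rho> = y"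
proof -
  have "xy t \<rho> = (x, y)"
    unfolding xy_def
  proof (rule the_equality)
    fix p
    assume "xy_eqs t \<rho> (fst p) (snd p)"
    then have "tilted_mean t (snd p) = tilted_mean t y"
      and "fst p = - ln (partition_fn t (snd p))" "x = - ln (partition_fn t y)"
      using eqs assms(1) by (simp_all add: xy_eqs_iff_tilted_mean)
    moreover from this(1) have "snd p = y"
      using strict_mono_eq[OF strict_mono_tilted_mean[OF assms(1)]] by simp
    ultimately show "p = (x, y)"
      by (simp add: prod_eq_iff)
  qed (simp add: eqs)
  then show ?thesis
    by (simp add: y_t_def)
qed

lemma continuous_on_tilted_mean:
  assumes "1 \<le> t"
  shows "continuous_on S (tilted_mean t)"
proof -
  have "continuous_on S (partition_fn t)"
    unfolding partition_fn_def by (intro continuous_intros) (simp add: d_nonzero)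
  moreover have "partition_fn t y \<noteq> 0" for y
    using partition_fn_pos[OF assms, of y] by simp
  ultimately show ?thesis
    unfolding tilted_mean_def by (intro continuous_intros) (auto simp: d_nonzero)
qed

lemma exists_tilted_mean_eq:
  assumes "1 \<le> t" "3/2 \<le> \<rho>" "\<rho> < real t"
  shows "\<exists>y. tilted_mean t y = \<rho>"
proof -
  have eqs: "xy_eqs t (tilted_mean t y) (- ln (partition_fn t y)) y" for y
    using xy_eqs_iff_tilted_mean[OF assms(1)] by simp
  define y1 :: real where "y1 = - ln 4"
  define y2 where "y2 = ln (2 * real t * 2 ^ t / (real t - \<rho>))"
  have "tilted_mean t y1 \<le> \<rho>"
    using mean_le_of_exp_le_one[OF eqs, of y1] assms(2) by (simp add: y1_def exp_minus)
  have "(1::real) \<le> 2 * 2 ^ t"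
    using one_le_power[of "2::real" "Suc t"] by simp
  then have "real t * 1 \<le> real t * (2 * 2 ^ t)"
    by (intro mult_left_mono) auto
  then have "real t - \<rho> \<le> 2 * real t * 2 ^ t"
    using assms by linarith
  then have "1 \<le> 2 * real t * 2 ^ t / (real t - \<rho>)"
    using assms by simp
  then have "0 \<le> y2"
    unfolding y2_def by (rule ln_ge_zero)
  then have "y1 \<le> y2"
    unfolding y1_def using ln_ge_zero[of "4::real"] by linarith
  have "(real t - tilted_mean t y2) * exp y2 \<le> 2 * real t * 2 ^ t"
    by (rule gap_mult_exp_le[OF eqs])
  then have "\<rho> \<le> tilted_mean t y2"
    using \<open>1 \<le> 2 * real t * 2 ^ t / (real t - \<rho>)\<close> assms by (simp add: y2_def field_simps)
  then show ?thesis
    using IVT'[of "tilted_mean t" y1 \<rho> y2] \<open>tilted_mean t y1 \<le> \<rho>\<close> \<open>y1 \<le> y2\<close>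
      continuous_on_tilted_mean[OF assms(1)] by blast
qed

lemma exp_ge_of_gap_lt:
  assumes eqs: "xy_eqs t \<rho> x y" and "2 \<le> \<rho>" "1 \<le> M" "real t - \<rho> < real M / 2"
  shows "real t * 2 ^ t \<le> 4 * real M * 4 ^ M * exp y"
proof (cases "2 * M \<le> t")
  case True
  then have "real t * 2 ^ t < exp y * 2 ^ (M + 2)"
    using gap_ge_of_exp_le[OF eqs \<open>1 \<le> M\<close> True] assms(4) by force
  also have "\<dots> \<le> exp y * (4 * real M * 4 ^ M)"
    using \<open>1 \<le> M\<close> power_mono[of 2 4 M] mult_mono[of 1 "real M" "2 ^ M" "4 ^ M"]
    by (intro mult_left_mono) (auto simp: power_add)
  finally show ?thesis
    by (simp add: ac_simps)
next
  case False
  have "1/2 \<le> exp y"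
  proof (cases "exp y \<le> 1")
    case True
    then show ?thesis
      using mean_le_of_exp_le_one[OF eqs True] assms(2) by linarith
  qed linarith
  have "(2::real) ^ t \<le> 4 ^ M"
    using False power_increasing[of t "2 * M" "2::real"] by (simp add: power_mult)
  then have "real t * 2 ^ t \<le> (2 * real M) * 4 ^ M"
    using False by (intro mult_mono) auto
  also have "\<dots> \<le> 4 * real M * 4 ^ M * exp y"
    using \<open>1/2 \<le> exp y\<close> mult_left_mono[of "1/2" "exp y" "4 * real M * 4 ^ M"] by simp
  finally show ?thesis .
qed

lemma exp_le_of_gap_ge:
  assumes eqs: "xy_eqs t \<rho> x y" and "0 < c" "c \<le> real t - \<rho>"
  shows "exp y \<le> 2 / c * (real t * 2 ^ t)"
proof -
  have "c * exp y \<le> (real t - \<rho>) * exp y"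
    using assms(3) by (intro mult_right_mono) auto
  also have "\<dots> \<le> 2 * real t * 2 ^ t"
    by (rule gap_mult_exp_le[OF eqs])
  finally show ?thesis
    using \<open>0 < c\<close> by (simp add: field_simps)
qed

theorem lemma36:
  fixes c C :: real
  assumes "0 < c" and "c < C"
  shows "\<exists>K::real. \<forall>(t::nat) (\<rho>::real).
           t > 0 \<longrightarrow> \<rho> \<ge> 2 \<longrightarrow> c < real t - \<rho> \<longrightarrow> real t - \<rho> < C \<longrightarrow>
           \<bar>y_t t \<rho> - ln (real t * 2 ^ t)\<bar> \<le> K"
proof -
  define M where "M = nat \<lceil>2 * C\<rceil> + 1"
  have "1 \<le> M" "2 * C < real M"
    unfolding M_def by linarith+
  show ?thesis
  proof (intro exI allI impI)
    fix t :: nat and \<rho> :: real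
    assume "t > 0" "\<rho> \<ge> 2" "c < real t - \<rho>" "real t - \<rho> < C"
    then have "2 \<le> t"
      using assms(1) by linarith
    obtain y where "tilted_mean t y = \<rho>"
      using exists_tilted_mean_eq[of t \<rho>] \<open>\<rho> \<ge> 2\<close> \<open>c < real t - \<rho>\<close> assms(1) \<open>2 \<le> t\<close> by auto
    then have eqs: "xy_eqs t \<rho> (- ln (partition_fn t y)) y"
      using xy_eqs_iff_tilted_mean[of t] \<open>2 \<le> t\<close> by simp
    have "real t * 2 ^ t \<le> 4 * real M * 4 ^ M * exp y"
      using exp_ge_of_gap_lt[OF eqs \<open>\<rho> \<ge> 2\<close> \<open>1 \<le> M\<close>] \<open>real t - \<rho> < C\<close> \<open>2 * C < real M\<close> by simp
    moreover have "exp y \<le> 2 / c * (real t * 2 ^ t)"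
      using exp_le_of_gap_ge[OF eqs assms(1)] \<open>c < real t - \<rho>\<close> by simp
    ultimately show "\<bar>y_t t \<rho> - ln (real t * 2 ^ t)\<bar> \<le> max (ln (4 * real M * 4 ^ M)) (ln (2 / c))"
      using y_t_eqI[OF \<open>2 \<le> t\<close> eqs] abs_diff_ln_le_of_exp_bounds \<open>t > 0\<close> \<open>1 \<le> M\<close> assms(1)
      by simp
  qed
qed

end
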